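(* Let $E\subset\mathbb R^{n-1}$ be open and $B\colon E\to\mathbb R^{n-1}$ smooth, and suppose the oriented lines $\ell_y=\{(t,\,y+tB(y)):t\in\mathbb R\}\subset\mathbb R\times\mathbb R^{n-1}=\mathbb R^n$, $y\in E$, form a smooth nondegenerate line fibration of an open subset of $\mathbb R^n$. Then for every $y\in E$, the linear map $dB_y\colon\mathbb R^{n-1}\to\mathbb R^{n-1}$ has no real eigenvalues.
   Context: A smooth line fibration of an open set $T\subset\mathbb R^n$ is a family of pairwise disjoint oriented lines with union $T$ given by a smooth unit vector field $V$ on $T$ whose integral curves are these lines; it is nondegenerate if at every point $\nabla V$ vanishes only in the direction of $V$ (i.e. $\nabla_XV=0$ implies $X\in\mathrm{span}(V)$). Here $\mathrm{Hom}(\mathbb R,\mathbb R^{n-1})$ is identified with $\mathbb R^{n-1}$. *)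

theory Defs
  imports "HOL-Analysis.Analysis"
begin

text \<open>In finite dimensions this is equivalent
  to f being C^k for every k.\<close>
definition smooth_on :: "'a::euclidean_space set \<Rightarrow> ('a \<Rightarrow> 'b::real_normed_vector) \<Rightarrow> bool" where
  "smooth_on S f \<longleftrightarrow>
     (\<exists>D :: 'a list \<Rightarrow> 'a \<Rightarrow> 'b.
        (\<forall>x\<in>S. D [] x = f x) \<and>
        (\<forall>vs. continuous_on S (D vs) \<and>
               (\<forall>x\<in>S. (D vs has_derivative (\<lambda>h. D (h # vs) x)) (at x))))"

definition fib_line :: "('a::euclidean_space \<Rightarrow> 'a) \<Rightarrow> 'a \<Rightarrow> (real \<times> 'a) set" where
  "fib_line B y = {(t, y + t *\<^sub>R B y) | t. True}"

text \<open>The lines l_y (y in E) form a smooth nondegenerate line fibration of the open set T,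
  given by the smooth unit vector field V on T whose integral curves are the (oriented) lines.\<close>
definition smooth_nondeg_line_fibration ::
  "'a::euclidean_space set \<Rightarrow> ('a \<Rightarrow> 'a) \<Rightarrow> (real \<times> 'a) set \<Rightarrow> (real \<times> 'a \<Rightarrow> real \<times> 'a) \<Rightarrow> bool" where
  "smooth_nondeg_line_fibration E B T V \<longleftrightarrow>
     open T \<and>
     T = (\<Union>y\<in>E. fib_line B y) \<and>
     (\<forall>y1\<in>E. \<forall>y2\<in>E. y1 \<noteq> y2 \<longrightarrow> fib_line B y1 \<inter> fib_line B y2 = {}) \<and>
     smooth_on T V \<and>
     (\<forall>p\<in>T. norm (V p) = 1) \<and>
     (\<forall>y\<in>E. \<forall>t. V (t, y + t *\<^sub>R B y) = (1 / norm ((1::real), B y)) *\<^sub>R (1, B y)) \<and>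
     (\<forall>p\<in>T. \<forall>X. frechet_derivative V (at p) X = 0 \<longrightarrow> X \<in> span {V p})"

end

theory Submission
  imports Defs
begin

text \<open>The field is constant along each line: \<open>V (t, y + t B y) = W (B y)\<close> for all \<open>t\<close>, where
  \<open>W = line_direction\<close> is the unit direction of slope \<open>B y\<close>. Differentiating in \<open>y\<close> gives
  \<open>dV (0, v + t dB v) = dW (dB v)\<close>, and \<open>dW\<close> is injective since \<open>W\<close> has the left inverse
  \<open>direction_slope\<close>. If \<open>dB v = c v\<close> with \<open>c \<noteq> 0\<close>, the lines near \<open>\<ell>\<^sub>y\<close> focus at time
  \<open>t = -1/c\<close>, where the left-hand side vanishes, so \<open>dB v = 0\<close>. If \<open>c = 0\<close>, taking \<open>t = 0\<close> gives
  \<open>dV (0, v) = 0\<close> although \<open>(0, v)\<close> is not parallel to \<open>V\<close>, contradicting nondegeneracy.\<close>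

lemma smooth_on_has_frechet_derivative:
  assumes "smooth_on S f" "open S" "x \<in> S"
  shows "(f has_derivative frechet_derivative f (at x)) (at x)"
proof -
  obtain D where D0: "\<forall>x\<in>S. D [] x = f x"
    and Dd: "\<forall>vs. \<forall>x\<in>S. (D vs has_derivative (\<lambda>h. D (h # vs) x)) (at x)"
    using assms(1) unfolding smooth_on_def by blast
  have "(D [] has_derivative (\<lambda>h. D [h] x)) (at x)" using Dd assms(3) by blast
  then have "(f has_derivative (\<lambda>h. D [h] x)) (at x)"
    by (rule has_derivative_transform_within_open[OF _ assms(2,3)]) (use D0 in auto)
  then show ?thesis using frechet_derivative_works differentiable_def by blast
qed

definition line_direction :: "'a::real_inner \<Rightarrow> real \<times> 'a" where
  "line_direction b = (1 / norm (1::real, b)) *\<^sub>R (1, b)"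

definition direction_slope :: "real \<times> 'a::real_inner \<Rightarrow> 'a" where
  "direction_slope w = (1 / fst w) *\<^sub>R snd w"

lemma norm_one_Pair_pos: "0 < norm (1::real, b)"
  by (simp add: zero_prod_def)

lemma fst_line_direction_pos: "0 < fst (line_direction b)"
  using norm_one_Pair_pos[of b] by (simp add: line_direction_def)

lemma direction_slope_line_direction [simp]: "direction_slope (line_direction b) = b"
  using norm_one_Pair_pos[of b] by (simp add: line_direction_def direction_slope_def)

lemma line_direction_has_frechet_derivative:
  "(line_direction has_derivative frechet_derivative line_direction (at b)) (at b)"
proof -
  have "(\<lambda>b. (1::real, b)) differentiable (at b)"
    by (auto intro!: derivative_eq_intros simp: differentiable_def)
  moreover have "norm differentiable (at (1::real, b))"
    by (rule differentiable_norm_at) (simp add: zero_prod_def)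
  ultimately have "(\<lambda>b. norm (1::real, b)) differentiable (at b)"
    using differentiable_compose[of norm] by metis
  then have "line_direction differentiable (at b)"
    unfolding line_direction_def
    by (intro differentiable_scaleR differentiable_divide) (auto simp: zero_prod_def)
  then show ?thesis by (simp add: frechet_derivative_works)
qed

lemma line_direction_derivative_eq_0_iff:
  "frechet_derivative line_direction (at b) h = 0 \<longleftrightarrow> h = 0"
proof -
  let ?w = "line_direction b" and ?dW = "frechet_derivative line_direction (at b)"
  have "direction_slope differentiable (at ?w)"
    using fst_line_direction_pos[of b] unfolding direction_slope_def differentiable_def
    by (intro exI) (auto intro!: derivative_eq_intros)
  then have dS: "(direction_slope has_derivative frechet_derivative direction_slope (at ?w)) (at ?w)"
    by (simp add: frechet_derivative_works)
  from has_derivative_compose[OF line_direction_has_frechet_derivative dS]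
  have "((\<lambda>x. x) has_derivative frechet_derivative direction_slope (at ?w) \<circ> ?dW) (at b)"
    by (simp add: o_def)
  from has_derivative_unique[OF has_derivative_ident this]
  have left_inverse: "frechet_derivative direction_slope (at ?w) (?dW h) = h"
    by (metis comp_apply)
  show ?thesis
  proof
    assume "?dW h = 0"
    then show "h = 0"
      using left_inverse linear_0[OF has_derivative_linear[OF dS]] by simp
  qed (simp add: linear_0[OF has_derivative_linear[OF line_direction_has_frechet_derivative]])
qed

lemma frechet_derivative_line_field:
  assumes "open E" "y \<in> E"
    and B: "(B has_derivative DB) (at y)"
    and V: "(V has_derivative DV) (at (t, y + t *\<^sub>R B y))"
    and field: "\<forall>y'\<in>E. V (t, y' + t *\<^sub>R B y') = line_direction (B y')"
  shows "DV (0, h + t *\<^sub>R DB h) = frechet_derivative line_direction (at (B y)) (DB h)"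
proof -
  have "((\<lambda>y'. (t, y' + t *\<^sub>R B y')) has_derivative (\<lambda>h. (0, h + t *\<^sub>R DB h))) (at y)"
    by (auto intro!: derivative_eq_intros B)
  from has_derivative_compose[OF this V]
  have "((\<lambda>y'. V (t, y' + t *\<^sub>R B y')) has_derivative (\<lambda>h. DV (0, h + t *\<^sub>R DB h))) (at y)" .
  then have "((\<lambda>y'. line_direction (B y')) has_derivative (\<lambda>h. DV (0, h + t *\<^sub>R DB h))) (at y)"
    by (rule has_derivative_transform_within_open[OF _ assms(1,2)]) (use field in auto)
  moreover have "((\<lambda>y'. line_direction (B y')) has_derivative
                   (\<lambda>h. frechet_derivative line_direction (at (B y)) (DB h))) (at y)"
    using has_derivative_compose[OF B line_direction_has_frechet_derivative] by (simp add: o_def)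
  ultimately have "(\<lambda>h. DV (0, h + t *\<^sub>R DB h)) =
                    (\<lambda>h. frechet_derivative line_direction (at (B y)) (DB h))"
    by (rule has_derivative_unique)
  then show ?thesis by (simp add: fun_eq_iff)
qed

lemma focal_eigenvector_eq_0:
  assumes "open E" "y \<in> E"
    and B: "(B has_derivative DB) (at y)"
    and V: "(V has_derivative DV) (at (- 1 / c, y + (- 1 / c) *\<^sub>R B y))"
    and field: "\<forall>y'\<in>E. V (- 1 / c, y' + (- 1 / c) *\<^sub>R B y') = line_direction (B y')"
    and eigen: "DB v = c *\<^sub>R v" and "c \<noteq> 0"
  shows "v = 0"
proof -
  have "v + (- 1 / c) *\<^sub>R DB v = 0"
    using eigen \<open>c \<noteq> 0\<close> by simp
  then have "frechet_derivative line_direction (at (B y)) (DB v) = 0"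
    using frechet_derivative_line_field[OF assms(1,2) B V field, of v]
      linear_0[OF has_derivative_linear[OF V]] by (simp add: zero_prod_def)
  then show "v = 0"
    using eigen \<open>c \<noteq> 0\<close> by (simp add: line_direction_derivative_eq_0_iff)
qed

lemma nondegenerate_kernel_eq_0:
  assumes "open E" "y \<in> E"
    and B: "(B has_derivative DB) (at y)"
    and V: "(V has_derivative DV) (at (0, y))"
    and field: "\<forall>y'\<in>E. V (0, y') = line_direction (B y')"
    and nondeg: "\<And>X. DV X = 0 \<Longrightarrow> X \<in> span {V (0, y)}"
    and kernel: "DB v = 0"
  shows "v = 0"
proof -
  have "DV (0, v) = frechet_derivative line_direction (at (B y)) (DB v)"
    using frechet_derivative_line_field[of E y B DB V DV 0 v] assms(1,2) B V field by simp
  then have "DV (0, v) = 0"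
    using kernel by (simp add: line_direction_derivative_eq_0_iff)
  then have "(0, v) \<in> span {line_direction (B y)}"
    using nondeg field \<open>y \<in> E\<close> by simp
  then obtain k where k: "(0, v) = k *\<^sub>R line_direction (B y)"
    by (auto simp: span_singleton)
  then have "fst (0::real, v) = fst (k *\<^sub>R line_direction (B y))"
    by (rule arg_cong)
  then have "k = 0"
    using fst_line_direction_pos[of "B y"] by simp
  then show "v = 0"
    using k by (simp add: zero_prod_def)
qed

theorem corollary3p9:
  fixes E :: "'a::euclidean_space set"
    and B :: "'a \<Rightarrow> 'a"
    and T :: "(real \<times> 'a) set"
    and V :: "real \<times> 'a \<Rightarrow> real \<times> 'a"
  assumes "open E"
    and "smooth_on E B"
    and "smooth_nondeg_line_fibration E B T V"
  shows "\<forall>y\<in>E. \<not> (\<exists>c::real. \<exists>v. v \<noteq> 0 \<and> frechet_derivative B (at y) v = c *\<^sub>R v)"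
proof (intro ballI notI, elim exE conjE)
  fix y c v
  assume "y \<in> E" and "v \<noteq> 0" and eigen: "frechet_derivative B (at y) v = c *\<^sub>R v"
  have "open T" and T: "T = (\<Union>y\<in>E. fib_line B y)" and "smooth_on T V"
    and field: "\<forall>y\<in>E. \<forall>t. V (t, y + t *\<^sub>R B y) = line_direction (B y)"
    and nondeg: "\<forall>p\<in>T. \<forall>X. frechet_derivative V (at p) X = 0 \<longrightarrow> X \<in> span {V p}"
    using assms(3) unfolding smooth_nondeg_line_fibration_def line_direction_def by auto
  have on_line: "(t, y + t *\<^sub>R B y) \<in> T" for t
    unfolding T fib_line_def using \<open>y \<in> E\<close> by blast
  note B = smooth_on_has_frechet_derivative[OF assms(2,1) \<open>y \<in> E\<close>]
  note V = smooth_on_has_frechet_derivative[OF \<open>smooth_on T V\<close> \<open>open T\<close> on_line]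
  show False
  proof (cases "c = 0")
    case True
    have "(0, y) \<in> T"
      using on_line[of 0] by simp
    then have "\<And>X. frechet_derivative V (at (0, y)) X = 0 \<Longrightarrow> X \<in> span {V (0, y)}"
      using nondeg by blast
    moreover have "\<forall>y'\<in>E. V (0, y') = line_direction (B y')"
      using field[rule_format, of _ 0] by simp
    ultimately have "v = 0"
      using nondegenerate_kernel_eq_0[OF assms(1) \<open>y \<in> E\<close> B V[of 0, simplified]] eigen True
      by simp
    with \<open>v \<noteq> 0\<close> show False ..
  next
    case False
    then have "v = 0"
      using focal_eigenvector_eq_0[OF assms(1) \<open>y \<in> E\<close> B V[of "- 1 / c"] _ eigen False] field
      by blast
    with \<open>v \<noteq> 0\<close> show False ..
  qed
qed

end
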